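(* Let $C\subseteq\{-1,1\}^n$ be a binary code (in $\pm1$ form) and let the channel output be $\mathbf{y}=\mathbf{x}\mathbf{z}$ (componentwise product), where $\mathbf{x}\in C$ is the transmitted codeword and $\mathbf{z}$ is the channel noise vector. Consider a message-passing decoder on a Tanner graph of $C$ whose messages take values in $\{-Q,\dots,Q\}$ for some integer $Q>0$, and whose messages are treated as random variables with conditional distributions given $\mathbf{y}$. Let $\mu_i^{(0)}$ be the channel message of variable node $i$, let $\boldsymbol{\mu}^{(t)}$ be the vector of all variable-to-check messages $\mu_{k,j}^{(t)}$ at the start of iteration $t$, and let the next ideal message from variable node $i$ to check node $j$ be $\nu_{i,j}^{(t+1)}=F_{i,j}(\boldsymbol{\mu}^{(t)},\mu_i^{(0)})$. Assume that, conditionally on $\mathbf{y}$, the messages $\mu_{k,j}^{(t)}$ (over all edges $(k,j)$) and $\mu_i^{(0)}$ are mutually independent. If $F_{i,j}$ is a symmetric message-update function with respect to $C$, and if $\mu_i^{(0)}$ and $\mu_{i,j}^{(t)}$ have symmetric distributions for all $(i,j)$, then the next ideal messages $\nu_{i,j}^{(t+1)}$ also have symmetric distributions, i.e. $\phi_{\nu_{i,j}^{(t+1)}\mid\mathbf{y}}(\nu\mid\mathbf{x}\mathbf{z})=\phi_{\nu_{i,j}^{(t+1)}\mid\mathbf{y}}(x_i\nu\mid\mathbf{z})$ for all $\nu$, all $\mathbf{z}$ and all $\mathbf{x}\in C$.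
   Context: $\phi$ denotes a probability (mass/density) function. For a codeword $\mathbf{x}\in C$ and a message vector $\boldsymbol{\mu}$ indexed by edges $(k,j)$, $\mathbf{x}\boldsymbol{\mu}$ denotes the vector with entries $x_k\mu_{k,j}$. A message-update function $F_{i,j}$ is symmetric with respect to $C$ if $F_{i,j}(\boldsymbol{\mu},\nu_i^{(0)})=x_iF_{i,j}(\mathbf{x}\boldsymbol{\mu},x_i\nu_i^{(0)})$ for every message vector $\boldsymbol{\mu}$, every $\nu_i^{(0)}$ and every codeword $\mathbf{x}\in C$. A message $\mu$ associated with variable node $i$ has a symmetric distribution if $\phi_{\mu\mid\mathbf{y}}(m\mid\mathbf{x}\mathbf{z})=\phi_{\mu\mid\mathbf{y}}(x_im\mid\mathbf{z})$ for all $m$, all $\mathbf{z}$ and all $\mathbf{x}\in C$. *)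

theory Defs
  imports "HOL-Analysis.Analysis"
begin

text \<open>Vectors of length n are indexed by a finite type 'n; check nodes by a finite type 'c.
  Edges of the Tanner graph are pairs (variable node, check node).\<close>

definition pm_code :: "(int^'n) set \<Rightarrow> bool" where
  "pm_code C \<longleftrightarrow> (\<forall>x\<in>C. \<forall>k. x$k \<in> {-1, 1})"

definition cw_mult :: "int^'n \<Rightarrow> real^'n \<Rightarrow> real^'n" where
  "cw_mult x z = (\<chi> k. of_int (x$k) * z$k)"

definition msg_mult :: "('n \<times> 'c) set \<Rightarrow> int^'n \<Rightarrow> ('n \<times> 'c \<Rightarrow> int) \<Rightarrow> ('n \<times> 'c \<Rightarrow> int)" where
  "msg_mult E x mu = restrict (\<lambda>(k,j). x$k * mu (k,j)) E"

definition msg_vectors :: "int \<Rightarrow> ('n \<times> 'c) set \<Rightarrow> ('n \<times> 'c \<Rightarrow> int) set" where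
  "msg_vectors Q E = PiE E (\<lambda>_. {-Q..Q})"

definition is_msg_pmf :: "int \<Rightarrow> (int \<Rightarrow> real) \<Rightarrow> bool" where
  "is_msg_pmf Q p \<longleftrightarrow> (\<forall>m. 0 \<le> p m) \<and> (\<forall>m. m \<notin> {-Q..Q} \<longrightarrow> p m = 0)
      \<and> sum p {-Q..Q} = 1"

definition symmetric_update ::
  "int \<Rightarrow> ('n \<times> 'c) set \<Rightarrow> (int^'n) set \<Rightarrow> 'n \<Rightarrow>
   (('n \<times> 'c \<Rightarrow> int) \<Rightarrow> int \<Rightarrow> int) \<Rightarrow> bool" where
  "symmetric_update Q E C i Fij \<longleftrightarrow>
     (\<forall>mu\<in>msg_vectors Q E. \<forall>nu0\<in>{-Q..Q}. \<forall>x\<in>C.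
        Fij mu nu0 = x$i * Fij (msg_mult E x mu) (x$i * nu0))"

text \<open>symmetric distribution of a message at variable node i: phi(m | y) given as
  a conditional pmf  phi :: y \<Rightarrow> m \<Rightarrow> prob\<close>
definition symmetric_dist :: "(int^'n) set \<Rightarrow> 'n \<Rightarrow> (real^'n \<Rightarrow> int \<Rightarrow> real) \<Rightarrow> bool" where
  "symmetric_dist C i phi \<longleftrightarrow>
     (\<forall>m z. \<forall>x\<in>C. phi (cw_mult x z) m = phi z (x$i * m))"

text \<open>Conditional distribution (given y) of nu = Fij(mu, mu0), where conditionally on y
  the messages mu_e (e in E), with conditional pmfs pm e y, and mu0 (pmf p0 y) are
  mutually independent: the joint pmf is the product, and nu's pmf is its pushforward.\<close>
definition next_msg_dist ::
  "int \<Rightarrow> ('n \<times> 'c) set \<Rightarrow> (('n \<times> 'c \<Rightarrow> int) \<Rightarrow> int \<Rightarrow> int) \<Rightarrow>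
   ('n \<times> 'c \<Rightarrow> real^'n \<Rightarrow> int \<Rightarrow> real) \<Rightarrow> (real^'n \<Rightarrow> int \<Rightarrow> real) \<Rightarrow>
   real^'n \<Rightarrow> int \<Rightarrow> real" where
  "next_msg_dist Q E Fij pm p0 y v =
     (\<Sum>mu\<in>msg_vectors Q E. \<Sum>mu0\<in>{-Q..Q}.
        if Fij mu mu0 = v then (\<Prod>e\<in>E. pm e y (mu e)) * p0 y mu0 else 0)"

end

theory Submission
  imports Defs
begin

text \<open>Flipping every message by the sign of its variable node, i.e. substituting
  \<open>\<mu> \<mapsto> x\<mu>\<close> and \<open>\<mu>\<^sub>0 \<mapsto> x\<^sub>i\<mu>\<^sub>0\<close>, is an involution of the message alphabet. By the
  symmetry of the incoming distributions it turns the product weight of a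
  configuration at \<open>xz\<close> into its weight at \<open>z\<close>, and by the symmetry of \<open>F\<^sub>i\<^sub>j\<close> it turns the
  event \<open>F\<^sub>i\<^sub>j(\<mu>, \<mu>\<^sub>0) = \<nu>\<close> into \<open>F\<^sub>i\<^sub>j(x\<mu>, x\<^sub>i\<mu>\<^sub>0) = x\<^sub>i\<nu>\<close>. Reindexing the sum defining the
  distribution of \<open>\<nu>\<^sub>i\<^sub>j\<close> by this bijection gives the claim.\<close>

lemma pm_code_entries: "pm_code C \<Longrightarrow> x \<in> C \<Longrightarrow> \<forall>k. x$k \<in> {-1, 1}"
  unfolding pm_code_def by blast

lemma sign_mult_self: "(s::int) \<in> {-1, 1} \<Longrightarrow> s * (s * m) = m"
  by auto

lemma sign_mult_atLeastAtMost: "(s::int) \<in> {-1, 1} \<Longrightarrow> m \<in> {-Q..Q} \<Longrightarrow> s * m \<in> {-Q..Q}"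
  by (auto simp: minus_le_iff le_minus_iff)

lemma bij_betw_sign_mult: "(s::int) \<in> {-1, 1} \<Longrightarrow> bij_betw ((*) s) {-Q..Q} {-Q..Q}"
  by (rule bij_betw_byWitness[where f' = "(*) s"])
    (auto simp: sign_mult_self minus_le_iff le_minus_iff)

lemma msg_mult_in_msg_vectors:
  assumes "\<forall>k. x$k \<in> {-1, 1}" and "mu \<in> msg_vectors Q E"
  shows "msg_mult E x mu \<in> msg_vectors Q E"
  using assms sign_mult_atLeastAtMost
  unfolding msg_vectors_def msg_mult_def by (auto simp: PiE_iff simp del: atLeastAtMost_iff)

lemma msg_mult_msg_mult:
  assumes "\<forall>k. x$k \<in> {-1, 1}" and "mu \<in> msg_vectors Q E"
  shows "msg_mult E x (msg_mult E x mu) = mu"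
proof
  fix e :: "'a \<times> 'b"
  obtain k j where e: "e = (k, j)" by fastforce
  show "msg_mult E x (msg_mult E x mu) e = mu e"
  proof (cases "e \<in> E")
    case True
    then show ?thesis using assms(1) e by (simp add: msg_mult_def sign_mult_self)
  next
    case False
    then show ?thesis using assms(2) e
      by (simp add: msg_mult_def msg_vectors_def PiE_iff extensional_def)
  qed
qed

lemma bij_betw_msg_mult:
  "\<forall>k. x$k \<in> {-1, 1} \<Longrightarrow> bij_betw (msg_mult E x) (msg_vectors Q E) (msg_vectors Q E)"
  by (rule bij_betw_byWitness[where f' = "msg_mult E x"])
    (auto simp: msg_mult_msg_mult msg_mult_in_msg_vectors)

lemma next_msg_dist_cw_mult:
  assumes signs: "\<forall>k. x$k \<in> {-1, 1}"
    and F_sym: "\<And>mu mu0. mu \<in> msg_vectors Q E \<Longrightarrow> mu0 \<in> {-Q..Q} \<Longrightarrow>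
                  Fij mu mu0 = x$i * Fij (msg_mult E x mu) (x$i * mu0)"
    and pm_sym: "\<And>k j m. (k, j) \<in> E \<Longrightarrow> pm (k, j) (cw_mult x z) m = pm (k, j) z (x$k * m)"
    and p0_sym: "\<And>m. p0 (cw_mult x z) m = p0 z (x$i * m)"
  shows "next_msg_dist Q E Fij pm p0 (cw_mult x z) v = next_msg_dist Q E Fij pm p0 z (x$i * v)"
proof -
  define MV where "MV = msg_vectors Q E"
  define g where "g = (\<lambda>mu mu0. if Fij mu mu0 = x$i * v
                          then (\<Prod>e\<in>E. pm e z (mu e)) * p0 z mu0 else 0)"
  have weight: "(\<Prod>e\<in>E. pm e (cw_mult x z) (mu e)) = (\<Prod>e\<in>E. pm e z (msg_mult E x mu e))" for mu
    by (rule prod.cong) (auto simp: pm_sym msg_mult_def)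
  have event: "(Fij mu mu0 = v) \<longleftrightarrow> (Fij (msg_mult E x mu) (x$i * mu0) = x$i * v)"
    if "mu \<in> MV" "mu0 \<in> {-Q..Q}" for mu mu0
    using F_sym[OF that[unfolded MV_def]] signs sign_mult_self by metis
  have "next_msg_dist Q E Fij pm p0 (cw_mult x z) v
      = (\<Sum>mu\<in>MV. \<Sum>mu0\<in>{-Q..Q}. g (msg_mult E x mu) (x$i * mu0))"
    unfolding next_msg_dist_def MV_def[symmetric] g_def
    by (intro sum.cong refl) (simp add: weight event p0_sym)
  also have "\<dots> = (\<Sum>mu\<in>MV. \<Sum>mu0\<in>{-Q..Q}. g (msg_mult E x mu) mu0)"
    by (intro sum.cong refl sum.reindex_bij_betw bij_betw_sign_mult) (use signs in blast)
  also have "\<dots> = (\<Sum>mu\<in>MV. \<Sum>mu0\<in>{-Q..Q}. g mu mu0)"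
    unfolding MV_def by (rule sum.reindex_bij_betw[OF bij_betw_msg_mult[OF signs]])
  also have "\<dots> = next_msg_dist Q E Fij pm p0 z (x$i * v)"
    unfolding next_msg_dist_def MV_def g_def ..
  finally show ?thesis .
qed

theorem lemma1:
  fixes C :: "(int^'n) set"
    and E :: "('n \<times> 'c::finite) set"
    and Q :: int
    and F :: "'n \<Rightarrow> 'c \<Rightarrow> ('n \<times> 'c \<Rightarrow> int) \<Rightarrow> int \<Rightarrow> int"
    and pm :: "'n \<times> 'c \<Rightarrow> real^'n \<Rightarrow> int \<Rightarrow> real"
    and p0 :: "'n \<Rightarrow> real^'n \<Rightarrow> int \<Rightarrow> real"
  assumes "pm_code C"
    and "Q > 0"
    and "\<forall>(i,j)\<in>E. \<forall>mu\<in>msg_vectors Q E. \<forall>mu0\<in>{-Q..Q}. F i j mu mu0 \<in> {-Q..Q}"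
    and "\<forall>e\<in>E. \<forall>y. is_msg_pmf Q (pm e y)"
    and "\<forall>i y. is_msg_pmf Q (p0 i y)"
    and "\<forall>(i,j)\<in>E. symmetric_update Q E C i (F i j)"
    and "\<forall>i. symmetric_dist C i (p0 i)"
    and "\<forall>(i,j)\<in>E. symmetric_dist C i (pm (i,j))"
  shows "\<forall>(i,j)\<in>E. \<forall>v z. \<forall>x\<in>C.
           next_msg_dist Q E (F i j) pm (p0 i) (cw_mult x z) v
         = next_msg_dist Q E (F i j) pm (p0 i) z (x$i * v)"
proof (intro ballI allI, clarify)
  fix i j v z x
  assume ij: "(i, j) \<in> E" and x: "x \<in> C"
  show "next_msg_dist Q E (F i j) pm (p0 i) (cw_mult x z) v
      = next_msg_dist Q E (F i j) pm (p0 i) z (x$i * v)"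
  proof (rule next_msg_dist_cw_mult)
    show "\<forall>k. x$k \<in> {-1, 1}" using pm_code_entries[OF assms(1) x] .
    show "F i j mu mu0 = x$i * F i j (msg_mult E x mu) (x$i * mu0)"
      if "mu \<in> msg_vectors Q E" "mu0 \<in> {-Q..Q}" for mu mu0
      using assms(6) ij that x unfolding symmetric_update_def by fastforce
    show "pm (k, j') (cw_mult x z) m = pm (k, j') z (x$k * m)" if "(k, j') \<in> E" for k j' m
      using assms(8) that x unfolding symmetric_dist_def by fastforce
    show "p0 i (cw_mult x z) m = p0 i z (x$i * m)" for m
      using assms(7) x unfolding symmetric_dist_def by blast
  qed
qed

end
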